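(* Let $P$ be a finite poset and $\Bbbk$ a commutative ring with unit. Suppose that for every $a\in P$ one has $\widetilde H_m\bigl(\Delta(P_{<a}),\Bbbk\bigr)=0$ for all $m\le d(a)-2$. Then for every $n$ the simplicial chain complex $C_\bullet(\Delta(P),\Bbbk)$ of the order complex of $P$ and the conic chain complex $\mathcal C_\bullet(P,\Bbbk)$ have isomorphic $n$-th homology.
   Context: For a finite poset $P$ and $a\in P$ put $P_{\le a}=\{x\in P: x\le a\}$ and $P_{<a}=\{x\in P: x<a\}$. For a subset $S\subseteq P$, $\Delta(S)$ denotes the order complex of $S$ (the simplicial complex whose faces are the chains of $S$). The dimension of $a$ is $d(a)=d_P(a)=\dim\Delta(P_{\le a})$. For $n\in\mathbb Z$ put $P^n=\{a\in P: d(a)\le n\}$ and $\Delta^n=\Delta(P^n)$ (so $\Delta^{-1}$ is the empty complex). Faces of order complexes are oriented by listing their vertices in decreasing order. The conic chain complex $\mathcal C_\bullet(P,\Bbbk)$ has $\mathcal C_n(P,\Bbbk)=H_n(\Delta^n,\Delta^{n-1};\Bbbk)$ (relative simplicial homology) for $n\ge 0$, and for $n\ge1$ its differential $\partial_n$ is the composition $\iota_{n-1}\circ\delta_n$, where $\delta_n\colon H_n(\Delta^n,\Delta^{n-1};\Bbbk)\to\widetilde H_{n-1}(\Delta^{n-1};\Bbbk)$ is the connecting map of the long exact sequence of the pair $(\Delta^n,\Delta^{n-1})$ and $\iota_{n-1}\colon \widetilde H_{n-1}(\Delta^{n-1};\Bbbk)\to H_{n-1}(\Delta^{n-1},\Delta^{n-2};\Bbbk)$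 is the (injective) natural map of the long exact sequence of the pair $(\Delta^{n-1},\Delta^{n-2})$. *)

theory Defs
  imports Main
begin

definition is_chain :: "'a rel \<Rightarrow> 'a set \<Rightarrow> bool" where
  "is_chain r \<sigma> \<longleftrightarrow> (\<forall>x\<in>\<sigma>. \<forall>y\<in>\<sigma>. (x, y) \<in> r \<or> (y, x) \<in> r)"

definition order_complex :: "'a rel \<Rightarrow> 'a set \<Rightarrow> 'a set set" where
  "order_complex r S = {\<sigma>. \<sigma> \<subseteq> S \<and> \<sigma> \<noteq> {} \<and> finite \<sigma> \<and> is_chain r \<sigma>}"

definition below_eq :: "'a rel \<Rightarrow> 'a set \<Rightarrow> 'a \<Rightarrow> 'a set" where
  "below_eq r P a = {x \<in> P. (x, a) \<in> r}"

definition below :: "'a rel \<Rightarrow> 'a set \<Rightarrow> 'a \<Rightarrow> 'a set" where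
  "below r P a = {x \<in> P. (x, a) \<in> r \<and> x \<noteq> a}"

text \<open>d(a) = dim Delta(P_{<=a}) = (maximal number of vertices of a face) - 1.\<close>
definition pdim :: "'a rel \<Rightarrow> 'a set \<Rightarrow> 'a \<Rightarrow> nat" where
  "pdim r P a = Max (card ` order_complex r (below_eq r P a)) - 1"

text \<open>P^m = {a. d(a) <= m} and Delta^m, for integer m (Delta^{-1} is empty).\<close>
definition skel :: "'a rel \<Rightarrow> 'a set \<Rightarrow> int \<Rightarrow> 'a set" where
  "skel r P m = {a \<in> P. int (pdim r P a) \<le> m}"

definition Dskel :: "'a rel \<Rightarrow> 'a set \<Rightarrow> int \<Rightarrow> 'a set set" where
  "Dskel r P m = order_complex r (skel r P m)"

text \<open>An n-chain of the complex K is a function from faces to 'k supported on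
n-faces of K (faces with n+1 vertices); each face is oriented by listing its
vertices in decreasing order.\<close>
definition chains :: "'a set set \<Rightarrow> nat \<Rightarrow> ('a set \<Rightarrow> 'k::zero) set" where
  "chains K n = {c. \<forall>\<sigma>. c \<sigma> \<noteq> 0 \<longrightarrow> \<sigma> \<in> K \<and> card \<sigma> = Suc n}"

text \<open>Simplicial boundary of an n-chain: removing the vertex in position i (in
decreasing order) carries the sign (-1)^i; position of v in the face insert v tau
equals the number of elements of tau above v.\<close>
definition bd :: "'a rel \<Rightarrow> nat \<Rightarrow> ('a set \<Rightarrow> 'k::comm_ring_1) \<Rightarrow> 'a set \<Rightarrow> 'k" where
  "bd r n c \<tau> = (if n = 0 then 0 else
     (\<Sum>v\<in>{v. v \<notin> \<tau> \<and> c (insert v \<tau>) \<noteq> 0}.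
        (-1) ^ card {w \<in> \<tau>. (v, w) \<in> r} * c (insert v \<tau>)))"

definition cycles :: "'a rel \<Rightarrow> 'a set set \<Rightarrow> nat \<Rightarrow> ('a set \<Rightarrow> 'k::comm_ring_1) set" where
  "cycles r K n = {c \<in> chains K n. bd r n c = (\<lambda>_. 0)}"

definition boundaries :: "'a rel \<Rightarrow> 'a set set \<Rightarrow> nat \<Rightarrow> ('a set \<Rightarrow> 'k::comm_ring_1) set" where
  "boundaries r K n = bd r (Suc n) ` chains K (Suc n)"

text \<open>Reduced cycles: in degree 0 the cycles are the chains with coefficient
sum 0 (kernel of the augmentation).  Reduced homology in degree m vanishes iff
every reduced m-cycle is an m-boundary.\<close>
definition red_cycles :: "'a rel \<Rightarrow> 'a set set \<Rightarrow> nat \<Rightarrow> ('a set \<Rightarrow> 'k::comm_ring_1) set" where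
  "red_cycles r K m = {c \<in> chains K m. (if m = 0 then sum c K = 0 else bd r m c = (\<lambda>_. 0))}"

definition red_homology_vanishes :: "'a rel \<Rightarrow> 'a set set \<Rightarrow> nat \<Rightarrow> 'k::comm_ring_1 itself \<Rightarrow> bool" where
  "red_homology_vanishes r K m _ \<longleftrightarrow>
     (red_cycles r K m :: ('a set \<Rightarrow> 'k) set) \<subseteq> boundaries r K m"

text \<open>Relative homology H_n(K, L) = rel_cycles / rel_boundaries.\<close>
definition rel_cycles :: "'a rel \<Rightarrow> 'a set set \<Rightarrow> 'a set set \<Rightarrow> nat \<Rightarrow> ('a set \<Rightarrow> 'k::comm_ring_1) set" where
  "rel_cycles r K L n = {c \<in> chains K n. bd r n c \<in> chains L (n - 1)}"

definition rel_boundaries :: "'a rel \<Rightarrow> 'a set set \<Rightarrow> 'a set set \<Rightarrow> nat \<Rightarrow> ('a set \<Rightarrow> 'k::comm_ring_1) set" where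
  "rel_boundaries r K L n =
     {(\<lambda>\<sigma>. bd r (Suc n) c \<sigma> + l \<sigma>) | c l. c \<in> chains K (Suc n) \<and> l \<in> chains L n}"

text \<open>C_n(P) = H_n(Delta^n, Delta^{n-1}).  On a class [c] (c a relative cycle),
the connecting map gives [bd c] in reduced H_{n-1}(Delta^{n-1}) and the natural
map gives [bd c] in H_{n-1}(Delta^{n-1}, Delta^{n-2}).  Hence the n-th homology
of the conic complex is (by the third isomorphism theorem) the quotient of
conic_cycles by conic_boundaries below: the preimages in rel_cycles of the
kernel of the conic differential and of the image of the next differential.\<close>
definition conic_cycles :: "'a rel \<Rightarrow> 'a set \<Rightarrow> nat \<Rightarrow> ('a set \<Rightarrow> 'k::comm_ring_1) set" where
  "conic_cycles r P n =
     {c \<in> rel_cycles r (Dskel r P (int n)) (Dskel r P (int n - 1)) n.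
        bd r n c \<in> rel_boundaries r (Dskel r P (int n - 1)) (Dskel r P (int n - 2)) (n - 1)}"

definition conic_boundaries :: "'a rel \<Rightarrow> 'a set \<Rightarrow> nat \<Rightarrow> ('a set \<Rightarrow> 'k::comm_ring_1) set" where
  "conic_boundaries r P n =
     {(\<lambda>\<sigma>. bd r (Suc n) c \<sigma> + b \<sigma>) | c b.
        c \<in> rel_cycles r (Dskel r P (int n + 1)) (Dskel r P (int n)) (Suc n) \<and>
        b \<in> rel_boundaries r (Dskel r P (int n)) (Dskel r P (int n - 1)) n}"

text \<open>Z1/B1 and Z2/B2 (submodules of spaces of 'k-valued functions) are
isomorphic as 'k-modules iff there is a map f from Z1 to Z2 which is 'k-linear
modulo B2, satisfies f z in B2 iff z in B1 (well defined and injective on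
classes) and is surjective modulo B2.\<close>
definition quot_iso ::
  "('b \<Rightarrow> 'k::comm_ring_1) set \<Rightarrow> ('b \<Rightarrow> 'k) set \<Rightarrow> ('c \<Rightarrow> 'k) set \<Rightarrow> ('c \<Rightarrow> 'k) set \<Rightarrow> bool" where
  "quot_iso Z1 B1 Z2 B2 \<longleftrightarrow>
     (\<exists>f. (\<forall>z\<in>Z1. f z \<in> Z2) \<and>
          (\<forall>z\<in>Z1. \<forall>z'\<in>Z1. \<forall>a b.
              (\<lambda>x. f (\<lambda>y. a * z y + b * z' y) x - (a * f z x + b * f z' x)) \<in> B2) \<and>
          (\<forall>z\<in>Z1. f z \<in> B2 \<longleftrightarrow> z \<in> B1) \<and>
          (\<forall>w\<in>Z2. \<exists>z\<in>Z1. (\<lambda>x. w x - f z x) \<in> B2))"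

end

theory Submission
  imports Defs "HOL-Library.Disjoint_Sets"
begin

text \<open>
  Faces of \<open>\<Delta>\<^sup>n\<close> have at most n + 1 vertices, so conic n-cycles are the n-cycles of
  \<open>\<Delta>\<^sup>n\<close> and conic n-boundaries are the boundaries of (n+1)-chains of \<open>\<Delta>\<^sup>n\<^sup>+\<^sup>1\<close>
  that lie in \<open>\<Delta>\<^sup>n\<close>.  Both halves of the isomorphism (every n-cycle of \<open>\<Delta>(P)\<close> is
  homologous to one in \<open>\<Delta>\<^sup>n\<close>, and an n-chain of \<open>\<Delta>\<^sup>n\<close> bounding in \<open>\<Delta>(P)\<close> is a
  conic boundary) follow by pushing chains down the skeleta.  Let c be a k-chain of
  \<open>\<Delta>\<^sup>m\<^sup>+\<^sup>1\<close>, k \<le> m, whose boundary lies in \<open>\<Delta>\<^sup>m\<close>.  A vertex a with d(a) = m + 1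
  is the top of every face containing it, so on these faces c is the cone from a over a chain
  \<open>\<gamma>\<^sub>a\<close> on \<open>P\<^sub><\<^sub>a\<close>.  Since \<open>\<partial>c\<close> vanishes on faces through a, \<open>\<gamma>\<^sub>a\<close> is a
  reduced (k-1)-cycle, and k - 1 \<le> d(a) - 2 makes it a boundary \<open>\<partial>\<beta>\<^sub>a\<close>.  By the cone
  formula \<open>\<partial>(a * \<beta>) = \<beta> - a * \<partial>\<beta>\<close>, the chain \<open>c + \<partial>(\<Sum>\<^sub>a a * \<beta>\<^sub>a)\<close> lies in
  \<open>\<Delta>\<^sup>m\<close>.
\<close>

section \<open>Isomorphic subquotients\<close>

definition lincomb_closed :: "('b \<Rightarrow> 'k::comm_ring_1) set \<Rightarrow> bool" where
  "lincomb_closed S \<longleftrightarrow> (\<forall>u\<in>S. \<forall>v\<in>S. \<forall>a b. (\<lambda>x. a * u x + b * v x) \<in> S)"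

lemma lincomb_closedD:
  "lincomb_closed S \<Longrightarrow> u \<in> S \<Longrightarrow> v \<in> S \<Longrightarrow> (\<lambda>x. a * u x + b * v x) \<in> S"
  by (simp add: lincomb_closed_def)

lemma lincomb_closed_add:
  assumes "lincomb_closed S" "u \<in> S" "v \<in> S"
  shows "(\<lambda>x. u x + v x) \<in> S"
  using lincomb_closedD[OF assms, of 1 1] by simp

lemma lincomb_closed_diff:
  assumes "lincomb_closed S" "u \<in> S" "v \<in> S"
  shows "(\<lambda>x. u x - v x) \<in> S"
  using lincomb_closedD[OF assms, of 1 "-1"] by simp

lemma quot_iso_subquotient:
  fixes Z1 B1 Z2 B2 :: "('b \<Rightarrow> 'k::comm_ring_1) set"
  assumes Z1: "lincomb_closed Z1" and B1: "lincomb_closed B1" and Z2: "lincomb_closed Z2"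
    and "Z2 \<subseteq> Z1" "B2 \<subseteq> B1" "Z2 \<inter> B1 \<subseteq> B2"
    and representative: "\<forall>z\<in>Z1. \<exists>w\<in>Z2. (\<lambda>x. z x - w x) \<in> B1"
  shows "quot_iso Z1 B1 Z2 B2"
proof -
  obtain f where f: "\<And>z. z \<in> Z1 \<Longrightarrow> f z \<in> Z2 \<and> (\<lambda>x. z x - f z x) \<in> B1"
    using representative by metis
  show ?thesis unfolding quot_iso_def
  proof (intro exI[of _ f] conjI ballI allI)
    fix z assume "z \<in> Z1"
    then show "f z \<in> Z2" using f by blast
  next
    fix z z' a b assume z: "z \<in> Z1" and z': "z' \<in> Z1"
    let ?z = "\<lambda>y. a * z y + b * z' y"
    have "?z \<in> Z1" using lincomb_closedD[OF Z1 z z'] .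
    then have "(\<lambda>x. (a * (z x - f z x) + b * (z' x - f z' x)) - (?z x - f ?z x)) \<in> B1"
      using lincomb_closed_diff[OF B1 lincomb_closedD[OF B1]] f z z' by blast
    moreover have "(\<lambda>x. f ?z x - (a * f z x + b * f z' x)) \<in> Z2"
      using lincomb_closed_diff[OF Z2 _ lincomb_closedD[OF Z2]] f z z' \<open>?z \<in> Z1\<close> by blast
    moreover have "(\<lambda>x. (a * (z x - f z x) + b * (z' x - f z' x)) - (?z x - f ?z x))
        = (\<lambda>x. f ?z x - (a * f z x + b * f z' x))"
      by (simp add: fun_eq_iff algebra_simps)
    ultimately show "(\<lambda>x. f ?z x - (a * f z x + b * f z' x)) \<in> B2"
      using assms(6) by auto
  next
    fix z assume z: "z \<in> Z1"
    have fz: "f z \<in> Z2" and d: "(\<lambda>x. z x - f z x) \<in> B1" using f[OF z] by auto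
    show "f z \<in> B2 \<longleftrightarrow> z \<in> B1"
    proof
      assume "f z \<in> B2"
      then have "(\<lambda>x. (z x - f z x) + f z x) \<in> B1"
        using lincomb_closed_add[OF B1 d] assms(5) by blast
      then show "z \<in> B1" by simp
    next
      assume "z \<in> B1"
      then have "(\<lambda>x. z x - (z x - f z x)) \<in> B1" using lincomb_closed_diff[OF B1 _ d] by blast
      then show "f z \<in> B2" using fz assms(6) by auto
    qed
  next
    fix w assume w: "w \<in> Z2"
    then have "w \<in> Z1" using assms(4) by blast
    then have "(\<lambda>x. w x - f w x) \<in> Z2 \<inter> B1"
      using f w by (auto intro: lincomb_closed_diff[OF Z2])
    then show "\<exists>z\<in>Z1. (\<lambda>x. w x - f z x) \<in> B2"
      using \<open>w \<in> Z1\<close> assms(6) by blast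
  qed
qed

lemma chains_mono: "K \<subseteq> K' \<Longrightarrow> chains K n \<subseteq> chains K' n"
  by (auto simp: chains_def)

lemma zero_in_chains: "(\<lambda>_. 0) \<in> chains K n"
  by (simp add: chains_def)

lemma chains_lincomb_closed: "lincomb_closed (chains K n :: ('a set \<Rightarrow> 'k::comm_ring_1) set)"
proof (unfold lincomb_closed_def, intro ballI allI)
  fix u v :: "'a set \<Rightarrow> 'k" and a b
  assume "u \<in> chains K n" "v \<in> chains K n"
  moreover have "a * u \<sigma> + b * v \<sigma> \<noteq> 0 \<Longrightarrow> u \<sigma> \<noteq> 0 \<or> v \<sigma> \<noteq> 0" for \<sigma> by auto
  ultimately show "(\<lambda>x. a * u x + b * v x) \<in> chains K n"
    unfolding chains_def by blast
qed

lemma chains_sum: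
  assumes "\<forall>i\<in>A. f i \<in> chains K n"
  shows "(\<lambda>\<sigma>. \<Sum>i\<in>A. f i \<sigma>) \<in> chains K n"
proof (unfold chains_def, intro CollectI allI impI)
  fix \<sigma> assume "(\<Sum>i\<in>A. f i \<sigma>) \<noteq> 0"
  then obtain i where "i \<in> A" "f i \<sigma> \<noteq> 0" by (meson sum.neutral)
  then show "\<sigma> \<in> K \<and> card \<sigma> = Suc n" using assms by (auto simp: chains_def)
qed

lemma chains_neg_sum:
  fixes f :: "'i \<Rightarrow> 'a set \<Rightarrow> 'k::ab_group_add"
  assumes "\<forall>i\<in>A. f i \<in> chains K n"
  shows "(\<lambda>\<sigma>. - (\<Sum>i\<in>A. f i \<sigma>)) \<in> chains K n"
  using chains_sum[OF assms] by (simp add: chains_def)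

lemma bd_chains:
  assumes "c \<in> chains (order_complex r S) (Suc n)"
  shows "bd r (Suc n) c \<in> chains (order_complex r S) n"
proof (unfold chains_def, intro CollectI allI impI)
  fix \<tau> assume "bd r (Suc n) c \<tau> \<noteq> 0"
  then obtain v where v: "v \<notin> \<tau>" "c (insert v \<tau>) \<noteq> 0"
    unfolding bd_def by (metis (mono_tags, lifting) empty_Collect_eq nat.distinct(1) sum.empty)
  then have face: "insert v \<tau> \<in> order_complex r S" "card (insert v \<tau>) = Suc (Suc n)"
    using assms by (auto simp: chains_def)
  then have "card \<tau> = Suc n" using v by (auto simp: order_complex_def)
  then show "\<tau> \<in> order_complex r S \<and> card \<tau> = Suc n"
    using face by (auto simp: order_complex_def is_chain_def)
qed

lemma bd_0 [simp]: "bd r 0 c = (\<lambda>_. 0)"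
  by (simp add: fun_eq_iff bd_def)

lemma bd_zero [simp]: "bd r n (\<lambda>_. 0) = (\<lambda>_. 0)"
  by (simp add: fun_eq_iff bd_def)

section \<open>Skeleta of the order complex\<close>

locale finite_poset =
  fixes P :: "'a set" and r :: "'a rel"
  assumes finite_P: "finite P" and partial_order: "partial_order_on P r"
begin

lemma r_refl: "x \<in> P \<Longrightarrow> (x, x) \<in> r"
  using partial_order partial_order_onD(1) by (auto simp: refl_on_def)

lemma r_trans: "(x, y) \<in> r \<Longrightarrow> (y, z) \<in> r \<Longrightarrow> (x, z) \<in> r"
  using partial_order partial_order_onD(2) by (meson transE)

lemma r_antisym: "(x, y) \<in> r \<Longrightarrow> (y, x) \<in> r \<Longrightarrow> x = y"
  using partial_order partial_order_onD(3) by (meson antisymD)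

lemma finite_order_complex: "S \<subseteq> P \<Longrightarrow> finite (order_complex r S)"
proof -
  assume "S \<subseteq> P"
  then have "order_complex r S \<subseteq> Pow P" by (auto simp: order_complex_def)
  then show ?thesis using finite_P by (simp add: finite_subset)
qed

lemma order_complex_mono: "S \<subseteq> S' \<Longrightarrow> order_complex r S \<subseteq> order_complex r S'"
  by (auto simp: order_complex_def)

lemma chain_has_top:
  assumes "finite \<sigma>" "\<sigma> \<noteq> {}" "is_chain r \<sigma>" "\<sigma> \<subseteq> P"
  shows "\<exists>a\<in>\<sigma>. \<forall>x\<in>\<sigma>. (x, a) \<in> r"
  using assms
proof (induction \<sigma> rule: finite_ne_induct)
  case (singleton x)
  then show ?case using r_refl by auto
next
  case (insert x F)
  then obtain m where m: "m \<in> F" "\<forall>y\<in>F. (y, m) \<in> r"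
    by (auto simp: is_chain_def)
  then consider "(x, m) \<in> r" | "(m, x) \<in> r"
    using insert.prems by (auto simp: is_chain_def)
  then show ?case
    using m insert.prems r_refl r_trans by cases blast+
qed

lemma singleton_face_below_eq: "a \<in> P \<Longrightarrow> {a} \<in> order_complex r (below_eq r P a)"
  using r_refl by (auto simp: order_complex_def below_eq_def is_chain_def)

lemma card_le_pdim:
  assumes "a \<in> P" "\<sigma> \<in> order_complex r (below_eq r P a)"
  shows "card \<sigma> \<le> Suc (pdim r P a)"
proof -
  let ?N = "card ` order_complex r (below_eq r P a)"
  have fin: "finite ?N" using finite_order_complex by (simp add: below_eq_def)
  have "card \<sigma> \<le> Max ?N" using Max_ge[OF fin] assms(2) by blast
  moreover have "card {a} \<le> Max ?N" using Max_ge[OF fin] singleton_face_below_eq[OF assms(1)] by blast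
  ultimately show ?thesis by (simp add: pdim_def)
qed

lemma pdim_attained:
  assumes "a \<in> P"
  shows "\<exists>\<sigma>\<in>order_complex r (below_eq r P a). card \<sigma> = Suc (pdim r P a)"
proof -
  let ?K = "order_complex r (below_eq r P a)"
  have "finite (card ` ?K)" "card ` ?K \<noteq> {}"
    using finite_order_complex singleton_face_below_eq[OF assms] by (auto simp: below_eq_def)
  then have "Max (card ` ?K) \<in> card ` ?K" by (rule Max_in)
  then obtain \<sigma> where \<sigma>: "\<sigma> \<in> ?K" "card \<sigma> = Max (card ` ?K)" by auto
  then have "card \<sigma> \<noteq> 0" by (auto simp: order_complex_def)
  then show ?thesis using \<sigma> by (auto simp: pdim_def)
qed

lemma pdim_strict_mono:
  assumes "a \<in> P" "b \<in> P" "(b, a) \<in> r" "b \<noteq> a"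
  shows "pdim r P b < pdim r P a"
proof -
  obtain \<sigma> where \<sigma>: "\<sigma> \<in> order_complex r (below_eq r P b)" "card \<sigma> = Suc (pdim r P b)"
    using pdim_attained[OF assms(2)] by blast
  then have below_b: "\<forall>x\<in>\<sigma>. (x, b) \<in> r \<and> x \<in> P" and "finite \<sigma>"
    by (auto simp: order_complex_def below_eq_def)
  then have "a \<notin> \<sigma>" using assms(3,4) r_antisym by blast
  have below_a: "\<forall>x\<in>\<sigma>. (x, a) \<in> r" using below_b assms(3) r_trans by blast
  have "insert a \<sigma> \<in> order_complex r (below_eq r P a)"
    using \<sigma>(1) below_a below_b assms(1) r_refl[OF assms(1)]
    by (auto simp: order_complex_def below_eq_def is_chain_def)
  then have "card (insert a \<sigma>) \<le> Suc (pdim r P a)" using card_le_pdim assms(1) by blast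
  then show ?thesis using \<open>a \<notin> \<sigma>\<close> \<sigma>(2) \<open>finite \<sigma>\<close> by simp
qed

lemma pdim_less_card:
  assumes "a \<in> P"
  shows "pdim r P a < card P"
proof -
  obtain \<sigma> where \<sigma>: "\<sigma> \<in> order_complex r (below_eq r P a)" "card \<sigma> = Suc (pdim r P a)"
    using pdim_attained[OF assms] by blast
  then have "\<sigma> \<subseteq> P" by (auto simp: order_complex_def below_eq_def)
  then have "card \<sigma> \<le> card P" by (rule card_mono[OF finite_P])
  then show ?thesis using \<sigma>(2) by simp
qed

lemma card_face_le_pdim_top:
  assumes "\<sigma> \<in> order_complex r S" "S \<subseteq> P"
  shows "\<exists>a\<in>\<sigma>. card \<sigma> \<le> Suc (pdim r P a)"
proof -
  have \<sigma>: "finite \<sigma>" "\<sigma> \<noteq> {}" "is_chain r \<sigma>" "\<sigma> \<subseteq> P"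
    using assms by (auto simp: order_complex_def)
  obtain a where a: "a \<in> \<sigma>" "\<forall>x\<in>\<sigma>. (x, a) \<in> r" using chain_has_top[OF \<sigma>] by blast
  then have "\<sigma> \<in> order_complex r (below_eq r P a)"
    using \<sigma> by (auto simp: order_complex_def below_eq_def)
  then have "card \<sigma> \<le> Suc (pdim r P a)" using card_le_pdim a(1) \<sigma>(4) by blast
  then show ?thesis using a(1) by blast
qed

lemma card_Dskel_face:
  assumes "\<sigma> \<in> Dskel r P m"
  shows "int (card \<sigma>) \<le> m + 1"
proof -
  have "skel r P m \<subseteq> P" by (auto simp: skel_def)
  then obtain a where a: "a \<in> \<sigma>" "card \<sigma> \<le> Suc (pdim r P a)"
    using card_face_le_pdim_top assms unfolding Dskel_def by blast
  moreover have "a \<in> skel r P m" using assms a(1) by (auto simp: Dskel_def order_complex_def)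
  ultimately show ?thesis by (simp add: skel_def)
qed

lemma chains_Dskel_eq_zero:
  assumes "c \<in> chains (Dskel r P m) k" "m < int k"
  shows "c = (\<lambda>_. 0)"
proof
  fix \<sigma>
  show "c \<sigma> = 0"
  proof (rule ccontr)
    assume "c \<sigma> \<noteq> 0"
    then have "\<sigma> \<in> Dskel r P m" "card \<sigma> = Suc k" using assms(1) by (auto simp: chains_def)
    then show False using card_Dskel_face[of \<sigma> m] assms(2) by simp
  qed
qed

lemma Dskel_subset: "Dskel r P m \<subseteq> order_complex r P"
  unfolding Dskel_def by (rule order_complex_mono) (auto simp: skel_def)

lemma Dskel_mono: "m \<le> m' \<Longrightarrow> Dskel r P m \<subseteq> Dskel r P m'"
  unfolding Dskel_def by (rule order_complex_mono) (auto simp: skel_def)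

lemma Dskel_full: "Dskel r P (int (k + card P)) = order_complex r P"
proof -
  have "int (pdim r P a) \<le> int (k + card P)" if "a \<in> P" for a
    using pdim_less_card[OF that] by linarith
  then have "skel r P (int (k + card P)) = P" by (auto simp: skel_def)
  then show ?thesis by (simp add: Dskel_def)
qed

lemma below_nonempty:
  assumes "a \<in> P" "pdim r P a \<noteq> 0"
  obtains b where "b \<in> below r P a"
proof -
  obtain \<sigma> where \<sigma>: "\<sigma> \<in> order_complex r (below_eq r P a)" "card \<sigma> = Suc (pdim r P a)"
    using pdim_attained[OF assms(1)] by blast
  have "\<not> \<sigma> \<subseteq> {a}"
    using card_mono[of "{a}" \<sigma>] \<sigma>(2) assms(2) by auto
  then show ?thesis using \<sigma>(1) that by (auto simp: order_complex_def below_eq_def below_def)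
qed

lemma order_complex_below_subset_Dskel:
  assumes "a \<in> P" "pdim r P a = Suc m"
  shows "order_complex r (below r P a) \<subseteq> Dskel r P (int m)"
  unfolding Dskel_def
proof (rule order_complex_mono, rule subsetI)
  fix b assume "b \<in> below r P a"
  then show "b \<in> skel r P (int m)"
    using pdim_strict_mono[of a b] assms by (auto simp: below_def skel_def)
qed

lemma Dskel_face_minus_top:
  assumes "\<sigma> \<in> Dskel r P (int (Suc m))" "a \<in> \<sigma>" "pdim r P a = Suc m"
  shows "\<sigma> - {a} \<subseteq> below r P a"
proof
  fix x assume x: "x \<in> \<sigma> - {a}"
  have x_skel: "x \<in> skel r P (int (Suc m))" and "a \<in> P" "x \<in> P"
    using assms x by (auto simp: Dskel_def order_complex_def skel_def)
  moreover have "(x, a) \<in> r \<or> (a, x) \<in> r"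
    using assms x by (auto simp: Dskel_def order_complex_def is_chain_def)
  moreover have "(a, x) \<notin> r"
    using pdim_strict_mono[of x a] x x_skel assms(3) \<open>a \<in> P\<close> \<open>x \<in> P\<close> by (auto simp: skel_def)
  ultimately show "x \<in> below r P a" using x by (auto simp: below_def)
qed

lemma Dskel_top_unique:
  assumes "\<sigma> \<in> Dskel r P (int (Suc m))" "a \<in> \<sigma>" "pdim r P a = Suc m" "a' \<in> \<sigma>" "pdim r P a' = Suc m"
  shows "a' = a"
proof (rule ccontr)
  assume "a' \<noteq> a"
  then have "a' \<in> below r P a" using Dskel_face_minus_top[OF assms(1-3)] assms(4) by auto
  moreover have "a \<in> P" using assms by (auto simp: Dskel_def order_complex_def skel_def)
  ultimately show False using pdim_strict_mono[of a a'] assms by (auto simp: below_def)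
qed

lemma Dskel_Suc_face_without_top:
  assumes "\<sigma> \<in> Dskel r P (int (Suc m))" "\<forall>a\<in>\<sigma>. pdim r P a \<noteq> Suc m"
  shows "\<sigma> \<in> Dskel r P (int m)"
proof -
  have "\<sigma> \<subseteq> skel r P (int m)"
  proof
    fix x assume "x \<in> \<sigma>"
    then have "x \<in> P" "int (pdim r P x) \<le> int (Suc m)" "pdim r P x \<noteq> Suc m"
      using assms by (auto simp: Dskel_def order_complex_def skel_def)
    then show "x \<in> skel r P (int m)" by (simp add: skel_def)
  qed
  then show ?thesis using assms(1) by (auto simp: Dskel_def order_complex_def)
qed

lemma notin_Dskel_if_pdim: "a \<in> \<sigma> \<Longrightarrow> pdim r P a = Suc m \<Longrightarrow> \<sigma> \<notin> Dskel r P (int m)"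
  by (auto simp: Dskel_def order_complex_def skel_def)

section \<open>The boundary operator\<close>

definition face_sign :: "'a \<Rightarrow> 'a set \<Rightarrow> 'k::comm_ring_1" where
  "face_sign v \<tau> = (-1) ^ card {w \<in> \<tau>. (v, w) \<in> r}"

text \<open>The augmented boundary: it agrees with bd in positive degrees on chains supported in P,
  and sends a 0-chain to its coefficient sum, placed on the empty face.\<close>
definition aug_bd :: "('a set \<Rightarrow> 'k::comm_ring_1) \<Rightarrow> 'a set \<Rightarrow> 'k" where
  "aug_bd c \<tau> = (\<Sum>v\<in>P - \<tau>. face_sign v \<tau> * c (insert v \<tau>))"

definition supported :: "('a set \<Rightarrow> 'k::zero) \<Rightarrow> bool" where
  "supported c \<longleftrightarrow> (\<forall>\<sigma>. c \<sigma> \<noteq> 0 \<longrightarrow> \<sigma> \<subseteq> P)"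

lemma chains_supported: "c \<in> chains (order_complex r S) k \<Longrightarrow> S \<subseteq> P \<Longrightarrow> supported c"
  by (auto simp: chains_def supported_def order_complex_def)

lemma chains_Dskel_supported: "c \<in> chains (Dskel r P m) k \<Longrightarrow> supported c"
  unfolding Dskel_def by (erule chains_supported) (auto simp: skel_def)

lemma supported_lincomb:
  fixes c c' :: "'a set \<Rightarrow> 'k::comm_ring_1"
  assumes "supported c" "supported c'"
  shows "supported (\<lambda>\<sigma>. x * c \<sigma> + y * c' \<sigma>)"
proof (unfold supported_def, intro allI impI)
  fix \<sigma> assume "x * c \<sigma> + y * c' \<sigma> \<noteq> 0"
  then have "c \<sigma> \<noteq> 0 \<or> c' \<sigma> \<noteq> 0" by auto
  then show "\<sigma> \<subseteq> P" using assms by (auto simp: supported_def)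
qed

lemma supported_neg_sum:
  fixes f :: "'i \<Rightarrow> 'a set \<Rightarrow> 'k::ab_group_add"
  assumes "\<forall>i\<in>A. supported (f i)"
  shows "supported (\<lambda>\<sigma>. - (\<Sum>i\<in>A. f i \<sigma>))"
proof (unfold supported_def, intro allI impI)
  fix \<sigma> assume "- (\<Sum>i\<in>A. f i \<sigma>) \<noteq> 0"
  then have "(\<Sum>i\<in>A. f i \<sigma>) \<noteq> 0" by simp
  then obtain i where "i \<in> A" "f i \<sigma> \<noteq> 0" by (meson sum.neutral)
  then show "\<sigma> \<subseteq> P" using assms by (auto simp: supported_def)
qed

lemma bd_Suc_eq_aug_bd:
  assumes "supported c"
  shows "bd r (Suc n) c = aug_bd c"
proof
  fix \<tau>
  have "{v. v \<notin> \<tau> \<and> c (insert v \<tau>) \<noteq> 0} \<subseteq> P - \<tau>" using assms by (auto simp: supported_def)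
  then have "(\<Sum>v\<in>{v. v \<notin> \<tau> \<and> c (insert v \<tau>) \<noteq> 0}. face_sign v \<tau> * c (insert v \<tau>)) = aug_bd c \<tau>"
    unfolding aug_bd_def by (intro sum.mono_neutral_left) (auto simp: finite_P)
  then show "bd r (Suc n) c \<tau> = aug_bd c \<tau>" by (simp add: bd_def face_sign_def)
qed

lemma aug_bd_lincomb:
  "aug_bd (\<lambda>\<sigma>. x * c \<sigma> + y * c' \<sigma>) \<tau> = x * aug_bd c \<tau> + y * aug_bd c' \<tau>"
proof -
  have "aug_bd (\<lambda>\<sigma>. x * c \<sigma> + y * c' \<sigma>) \<tau>
      = (\<Sum>v\<in>P - \<tau>. x * (face_sign v \<tau> * c (insert v \<tau>)) + y * (face_sign v \<tau> * c' (insert v \<tau>)))"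
    unfolding aug_bd_def by (rule sum.cong) (simp_all add: algebra_simps)
  then show ?thesis by (simp add: aug_bd_def sum.distrib sum_distrib_left)
qed

lemma aug_bd_neg_sum:
  "aug_bd (\<lambda>\<sigma>. - (\<Sum>i\<in>A. f i \<sigma>)) \<tau> = - (\<Sum>i\<in>A. aug_bd (f i) \<tau>)"
proof -
  have "aug_bd (\<lambda>\<sigma>. - (\<Sum>i\<in>A. f i \<sigma>)) \<tau>
      = - (\<Sum>v\<in>P - \<tau>. \<Sum>i\<in>A. face_sign v \<tau> * f i (insert v \<tau>))"
    by (simp add: aug_bd_def sum_distrib_left sum_negf)
  also have "\<dots> = - (\<Sum>i\<in>A. aug_bd (f i) \<tau>)"
    unfolding aug_bd_def by (subst sum.swap) (rule refl)
  finally show ?thesis .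
qed

lemma bd_lincomb:
  fixes c c' :: "'a set \<Rightarrow> 'k::comm_ring_1"
  assumes "supported c" "supported c'"
  shows "bd r n (\<lambda>\<sigma>. x * c \<sigma> + y * c' \<sigma>) = (\<lambda>\<tau>. x * bd r n c \<tau> + y * bd r n c' \<tau>)"
proof (cases n)
  case 0
  then show ?thesis by simp
next
  case (Suc m)
  then show ?thesis
    by (simp add: bd_Suc_eq_aug_bd assms supported_lincomb aug_bd_lincomb fun_eq_iff)
qed

lemma bd_neg_sum:
  assumes "\<forall>i\<in>A. supported (f i)"
  shows "bd r n (\<lambda>\<sigma>. - (\<Sum>i\<in>A. f i \<sigma>)) = (\<lambda>\<tau>. - (\<Sum>i\<in>A. bd r n (f i) \<tau>))"
proof (cases n)
  case 0
  then show ?thesis by simp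
next
  case (Suc m)
  then show ?thesis
    using assms by (simp add: bd_Suc_eq_aug_bd supported_neg_sum aug_bd_neg_sum fun_eq_iff)
qed

lemma face_sign_insert:
  assumes "finite \<tau>" "a \<notin> \<tau>"
  shows "(face_sign v (insert a \<tau>) :: 'k::comm_ring_1)
    = (if (v, a) \<in> r then - face_sign v \<tau> else face_sign v \<tau>)"
proof (cases "(v, a) \<in> r")
  case True
  then have "{w \<in> insert a \<tau>. (v, w) \<in> r} = insert a {w \<in> \<tau>. (v, w) \<in> r}" by auto
  then have "card {w \<in> insert a \<tau>. (v, w) \<in> r} = Suc (card {w \<in> \<tau>. (v, w) \<in> r})"
    using assms by simp
  then show ?thesis using True by (simp add: face_sign_def)
next
  case False
  then have "{w \<in> insert a \<tau>. (v, w) \<in> r} = {w \<in> \<tau>. (v, w) \<in> r}" by auto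
  then show ?thesis using False by (simp add: face_sign_def)
qed

text \<open>The two ways of removing two comparable vertices from a face carry opposite signs.\<close>
lemma aug_bd_aug_bd:
  fixes c :: "'a set \<Rightarrow> 'k::comm_ring_1"
  assumes "c \<in> chains (order_complex r S) k"
  shows "aug_bd (aug_bd c) = (\<lambda>_. 0)"
proof
  fix \<rho>
  define D where "D = Sigma (P - \<rho>) (\<lambda>v. P - insert v \<rho>)"
  define F where "F = (\<lambda>(v, u). face_sign v \<rho> * (face_sign u (insert v \<rho>) * c (insert u (insert v \<rho>))) :: 'k)"
  have "aug_bd (aug_bd c) \<rho> = (\<Sum>v\<in>P - \<rho>. \<Sum>u\<in>P - insert v \<rho>. F (v, u))"
    by (simp add: aug_bd_def F_def sum_distrib_left)
  also have "\<dots> = (\<Sum>(v, u)\<in>D. F (v, u))"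
    unfolding D_def by (rule sum.Sigma) (use finite_P in auto)
  also have "\<dots> = 0"
    unfolding case_prod_eta
  proof (rule sum_involution_eq_0[where h = prod.swap])
    fix p assume "p \<in> D"
    then obtain v u where p: "p = (v, u)" and vu: "v \<notin> \<rho>" "u \<notin> \<rho>" "u \<noteq> v"
      by (auto simp: D_def)
    show "prod.swap p \<in> D" "prod.swap (prod.swap p) = p" "prod.swap p \<noteq> p"
      using \<open>p \<in> D\<close> by (auto simp: D_def p)
    have swap: "insert v (insert u \<rho>) = insert u (insert v \<rho>)" by auto
    show "F (prod.swap p) + F p = 0"
    proof (cases "c (insert u (insert v \<rho>)) = 0")
      case True
      then show ?thesis by (simp add: F_def p swap)
    next
      case False
      then have face: "insert u (insert v \<rho>) \<in> order_complex r S"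
        using assms by (auto simp: chains_def)
      then have "finite \<rho>" by (auto simp: order_complex_def)
      have "(u, v) \<in> r \<or> (v, u) \<in> r" using face by (auto simp: order_complex_def is_chain_def)
      moreover have "\<not> ((u, v) \<in> r \<and> (v, u) \<in> r)" using r_antisym vu(3) by blast
      moreover have "face_sign u (insert v \<rho>) = (if (u, v) \<in> r then - face_sign u \<rho> else (face_sign u \<rho> :: 'k))"
        and "face_sign v (insert u \<rho>) = (if (v, u) \<in> r then - face_sign v \<rho> else (face_sign v \<rho> :: 'k))"
        using face_sign_insert[OF \<open>finite \<rho>\<close>] vu by blast+
      ultimately show ?thesis
        using swap by (auto simp: F_def p algebra_simps)
    qed
  qed
  finally show "aug_bd (aug_bd c) \<rho> = 0" .
qed

lemma bd_bd:
  assumes "c \<in> chains (order_complex r S) (Suc n)" "S \<subseteq> P"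
  shows "bd r n (bd r (Suc n) c) = (\<lambda>_. 0)"
proof (cases n)
  case 0
  then show ?thesis by simp
next
  case (Suc m)
  have "supported c" "supported (bd r (Suc n) c)"
    using chains_supported bd_chains assms by blast+
  then show ?thesis
    using aug_bd_aug_bd[OF assms(1)] Suc by (simp add: bd_Suc_eq_aug_bd)
qed

lemma bd_add_boundary:
  assumes "e \<in> chains (order_complex r S) (Suc k)" "S \<subseteq> P" "supported l"
  shows "bd r k (\<lambda>\<sigma>. bd r (Suc k) e \<sigma> + l \<sigma>) = bd r k l"
  using bd_lincomb[of "bd r (Suc k) e" l k 1 1] assms(3) bd_bd[OF assms(1,2)]
    chains_supported[OF bd_chains[OF assms(1)] assms(2)]
  by simp

lemma cycles_lincomb_closed:
  assumes "K \<subseteq> order_complex r P"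
  shows "lincomb_closed (cycles r K n :: ('a set \<Rightarrow> 'k::comm_ring_1) set)"
proof (unfold lincomb_closed_def, intro ballI allI)
  fix z z' :: "'a set \<Rightarrow> 'k" and a b
  assume "z \<in> cycles r K n" "z' \<in> cycles r K n"
  then have ch: "z \<in> chains K n" "z' \<in> chains K n" and "bd r n z = (\<lambda>_. 0)" "bd r n z' = (\<lambda>_. 0)"
    by (auto simp: cycles_def)
  moreover have "supported z" "supported z'"
    using ch chains_mono[OF assms] chains_supported by blast+
  ultimately show "(\<lambda>x. a * z x + b * z' x) \<in> cycles r K n"
    using lincomb_closedD[OF chains_lincomb_closed ch] by (simp add: cycles_def bd_lincomb)
qed

lemma boundaries_lincomb_closed:
  assumes "S \<subseteq> P"
  shows "lincomb_closed (boundaries r (order_complex r S) n :: ('a set \<Rightarrow> 'k::comm_ring_1) set)"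
proof (unfold lincomb_closed_def, intro ballI allI)
  fix u v :: "'a set \<Rightarrow> 'k" and a b
  assume "u \<in> boundaries r (order_complex r S) n" "v \<in> boundaries r (order_complex r S) n"
  then obtain c c' where c: "c \<in> chains (order_complex r S) (Suc n)" "u = bd r (Suc n) c"
    and c': "c' \<in> chains (order_complex r S) (Suc n)" "v = bd r (Suc n) c'"
    by (auto simp: boundaries_def)
  have "bd r (Suc n) (\<lambda>\<sigma>. a * c \<sigma> + b * c' \<sigma>) = (\<lambda>x. a * u x + b * v x)"
    unfolding c(2) c'(2) by (rule bd_lincomb) (use chains_supported c(1) c'(1) assms in blast)+
  moreover have "(\<lambda>\<sigma>. a * c \<sigma> + b * c' \<sigma>) \<in> chains (order_complex r S) (Suc n)"
    using lincomb_closedD[OF chains_lincomb_closed c(1) c'(1)] .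
  ultimately show "(\<lambda>x. a * u x + b * v x) \<in> boundaries r (order_complex r S) n"
    unfolding boundaries_def by (rule image_eqI[OF sym])
qed

section \<open>Cones and link chains\<close>

definition cone :: "'a \<Rightarrow> ('a set \<Rightarrow> 'k::zero) \<Rightarrow> 'a set \<Rightarrow> 'k" where
  "cone a \<beta> \<sigma> = (if a \<in> \<sigma> then \<beta> (\<sigma> - {a}) else 0)"

lemma supported_cone:
  assumes "a \<in> P" and "\<And>\<tau>. \<beta> \<tau> \<noteq> 0 \<Longrightarrow> \<tau> \<subseteq> below r P a"
  shows "supported (cone a \<beta>)"
  unfolding supported_def cone_def using assms by (auto simp: below_def)

lemma bd_cone_off_apex:
  fixes \<beta> :: "'a set \<Rightarrow> 'k::comm_ring_1"
  assumes a: "a \<in> P" and \<beta>: "\<And>\<tau>. \<beta> \<tau> \<noteq> 0 \<Longrightarrow> \<tau> \<subseteq> below r P a" and "a \<notin> \<rho>"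
  shows "bd r (Suc k) (cone a \<beta>) \<rho> = \<beta> \<rho>"
proof -
  have "bd r (Suc k) (cone a \<beta>) \<rho> = (\<Sum>v\<in>P - \<rho>. face_sign v \<rho> * cone a \<beta> (insert v \<rho>))"
    using supported_cone[where \<beta> = \<beta>, OF a \<beta>] by (simp add: bd_Suc_eq_aug_bd aug_bd_def)
  also have "\<dots> = (\<Sum>v\<in>P - \<rho>. if v = a then face_sign a \<rho> * \<beta> \<rho> else 0)"
    by (rule sum.cong) (use \<open>a \<notin> \<rho>\<close> in \<open>auto simp: cone_def\<close>)
  also have "\<dots> = face_sign a \<rho> * \<beta> \<rho>"
    using \<open>a \<notin> \<rho>\<close> a finite_P by simp
  also have "\<dots> = \<beta> \<rho>"
  proof (cases "\<beta> \<rho> = 0")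
    case False
    then have "{w \<in> \<rho>. (a, w) \<in> r} = {}"
      using \<beta> r_antisym by (fastforce simp: below_def)
    then have "card {w \<in> \<rho>. (a, w) \<in> r} = 0" by (simp only: card.empty)
    then show ?thesis by (simp add: face_sign_def)
  qed simp
  finally show ?thesis .
qed

lemma bd_cone_at_apex:
  fixes \<beta> :: "'a set \<Rightarrow> 'k::comm_ring_1"
  assumes a: "a \<in> P" and \<beta>: "\<And>\<tau>. \<beta> \<tau> \<noteq> 0 \<Longrightarrow> \<tau> \<subseteq> below r P a" and "a \<notin> \<tau>"
  shows "bd r (Suc k) (cone a \<beta>) (insert a \<tau>) = - aug_bd \<beta> \<tau>"
proof -
  let ?\<rho> = "insert a \<tau>"
  have "bd r (Suc k) (cone a \<beta>) ?\<rho> = (\<Sum>v\<in>P - ?\<rho>. face_sign v ?\<rho> * cone a \<beta> (insert v ?\<rho>))"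
    using supported_cone[where \<beta> = \<beta>, OF a \<beta>] by (simp add: bd_Suc_eq_aug_bd aug_bd_def)
  also have "\<dots> = (\<Sum>v\<in>P - ?\<rho>. - (face_sign v \<tau> * \<beta> (insert v \<tau>)))"
  proof (rule sum.cong)
    fix v assume "v \<in> P - ?\<rho>"
    then have "insert v ?\<rho> - {a} = insert v \<tau>" using \<open>a \<notin> \<tau>\<close> by auto
    then have cone_eq: "cone a \<beta> (insert v ?\<rho>) = \<beta> (insert v \<tau>)" by (simp add: cone_def)
    show "face_sign v ?\<rho> * cone a \<beta> (insert v ?\<rho>) = - (face_sign v \<tau> * \<beta> (insert v \<tau>))"
    proof (cases "\<beta> (insert v \<tau>) = 0")
      case False
      then have "insert v \<tau> \<subseteq> below r P a" by (rule \<beta>)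
      then have "(v, a) \<in> r" "finite \<tau>"
        using finite_subset[OF _ finite_P] by (auto simp: below_def)
      then have "face_sign v ?\<rho> = - (face_sign v \<tau> :: 'k)"
        using face_sign_insert[OF _ \<open>a \<notin> \<tau>\<close>, of v] by simp
      then show ?thesis using cone_eq by simp
    qed (simp add: cone_eq)
  qed simp
  also have "\<dots> = - aug_bd \<beta> \<tau>"
  proof -
    have "aug_bd \<beta> \<tau> = face_sign a \<tau> * \<beta> ?\<rho> + (\<Sum>v\<in>P - \<tau> - {a}. face_sign v \<tau> * \<beta> (insert v \<tau>))"
      unfolding aug_bd_def using finite_P a \<open>a \<notin> \<tau>\<close> by (subst sum.remove[of _ a]) auto
    moreover have "\<beta> ?\<rho> = 0" using \<beta> by (force simp: below_def)
    moreover have "P - \<tau> - {a} = P - ?\<rho>" by auto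
    ultimately show ?thesis by (simp add: sum_negf)
  qed
  finally show ?thesis .
qed

lemma bd_cone:
  fixes \<beta> :: "'a set \<Rightarrow> 'k::comm_ring_1"
  assumes a: "a \<in> P" and \<beta>: "\<And>\<tau>. \<beta> \<tau> \<noteq> 0 \<Longrightarrow> \<tau> \<subseteq> below r P a"
  shows "bd r (Suc k) (cone a \<beta>) = (\<lambda>\<rho>. \<beta> \<rho> - cone a (aug_bd \<beta>) \<rho>)"
proof
  fix \<rho>
  show "bd r (Suc k) (cone a \<beta>) \<rho> = \<beta> \<rho> - cone a (aug_bd \<beta>) \<rho>"
  proof (cases "a \<in> \<rho>")
    case True
    then have "\<beta> \<rho> = 0" using \<beta> by (force simp: below_def)
    then show ?thesis
      using bd_cone_at_apex[where \<beta> = \<beta> and \<tau> = "\<rho> - {a}" and k = k, OF a \<beta>] True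
      by (simp add: cone_def insert_absorb)
  next
    case False
    then show ?thesis
      using bd_cone_off_apex[where \<beta> = \<beta> and k = k, OF a \<beta> False] by (simp add: cone_def)
  qed
qed

lemma cone_chains:
  assumes a: "a \<in> P" and \<beta>: "\<beta> \<in> chains (order_complex r (below r P a)) k"
  shows "cone a \<beta> \<in> chains (order_complex r P) (Suc k)"
proof (unfold chains_def, intro CollectI allI impI)
  fix \<sigma> assume "cone a \<beta> \<sigma> \<noteq> 0"
  then have "a \<in> \<sigma>" and "\<beta> (\<sigma> - {a}) \<noteq> 0" by (auto simp: cone_def split: if_splits)
  then have face: "\<sigma> - {a} \<in> order_complex r (below r P a)" "card (\<sigma> - {a}) = Suc k"
    using \<beta> by (auto simp: chains_def)
  have \<sigma>: "\<sigma> = insert a (\<sigma> - {a})" using \<open>a \<in> \<sigma>\<close> by auto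
  have "insert a (\<sigma> - {a}) \<in> order_complex r P"
    using face(1) a r_refl[OF a] by (auto simp: order_complex_def is_chain_def below_def)
  moreover have "finite (\<sigma> - {a})" using face(1) by (simp add: order_complex_def)
  then have "card (insert a (\<sigma> - {a})) = Suc (Suc k)"
    using face(2) by (subst card_insert_disjoint) simp_all
  ultimately show "\<sigma> \<in> order_complex r P \<and> card \<sigma> = Suc (Suc k)"
    using \<sigma> by simp
qed

definition link_chain :: "('a set \<Rightarrow> 'k::zero) \<Rightarrow> 'a \<Rightarrow> 'a set \<Rightarrow> 'k" where
  "link_chain c a \<tau> = (if a \<in> \<tau> then 0 else c (insert a \<tau>))"

lemma cone_link_chain: "cone a (link_chain c a) \<sigma> = (if a \<in> \<sigma> then c \<sigma> else 0)"
  by (simp add: cone_def link_chain_def insert_absorb)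

lemma link_chain_below:
  assumes c: "c \<in> chains (Dskel r P (int (Suc m))) k" and a: "pdim r P a = Suc m"
    and "link_chain c a \<tau> \<noteq> 0"
  shows "\<tau> \<subseteq> below r P a"
proof -
  have "a \<notin> \<tau>" "c (insert a \<tau>) \<noteq> 0" using assms(3) by (auto simp: link_chain_def split: if_splits)
  then have "insert a \<tau> \<in> Dskel r P (int (Suc m))" using c by (auto simp: chains_def)
  then have "insert a \<tau> - {a} \<subseteq> below r P a" using Dskel_face_minus_top a by blast
  then show ?thesis using \<open>a \<notin> \<tau>\<close> by simp
qed

lemma link_chain_chains:
  assumes c: "c \<in> chains (Dskel r P (int (Suc m))) (Suc j)" and a: "pdim r P a = Suc m"
  shows "link_chain c a \<in> chains (order_complex r (below r P a)) j"
proof (unfold chains_def, intro CollectI allI impI)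
  fix \<tau> assume nz: "link_chain c a \<tau> \<noteq> 0"
  then have "a \<notin> \<tau>" "c (insert a \<tau>) \<noteq> 0" by (auto simp: link_chain_def split: if_splits)
  then have face: "insert a \<tau> \<in> Dskel r P (int (Suc m))" "card (insert a \<tau>) = Suc (Suc j)"
    using c by (auto simp: chains_def)
  then have "finite \<tau>" "is_chain r \<tau>"
    by (auto simp: Dskel_def order_complex_def is_chain_def)
  then have "card \<tau> = Suc j" using face(2) \<open>a \<notin> \<tau>\<close> by simp
  then show "\<tau> \<in> order_complex r (below r P a) \<and> card \<tau> = Suc j"
    using link_chain_below[OF c a nz] \<open>finite \<tau>\<close> \<open>is_chain r \<tau>\<close> by (auto simp: order_complex_def)
qed

lemma aug_bd_link_chain:
  assumes c: "c \<in> chains (Dskel r P (int (Suc m))) (Suc j)" and a: "a \<in> P" "pdim r P a = Suc m"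
    and bd_c: "bd r (Suc j) c \<in> chains (Dskel r P (int m)) j"
  shows "aug_bd (link_chain c a) = (\<lambda>_. 0)"
proof
  fix \<tau>
  show "aug_bd (link_chain c a) \<tau> = 0"
  proof (cases "a \<in> \<tau>")
    case True
    then show ?thesis by (simp add: aug_bd_def link_chain_def)
  next
    case False
    have "supported c" by (rule chains_Dskel_supported[OF c])
    then have "supported (cone a (link_chain c a))"
      by (simp add: supported_def cone_link_chain)
    then have "bd r (Suc j) c (insert a \<tau>) = bd r (Suc j) (cone a (link_chain c a)) (insert a \<tau>)"
      using \<open>supported c\<close> by (simp add: bd_Suc_eq_aug_bd aug_bd_def cone_link_chain)
    also have "\<dots> = - aug_bd (link_chain c a) \<tau>"
      by (rule bd_cone_at_apex[OF a(1) link_chain_below[OF c a(2)] False])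
    finally have "aug_bd (link_chain c a) \<tau> = - bd r (Suc j) c (insert a \<tau>)" by simp
    moreover have "insert a \<tau> \<notin> Dskel r P (int m)" using notin_Dskel_if_pdim a(2) by blast
    ultimately show ?thesis using bd_c by (auto simp: chains_def)
  qed
qed

lemma sum_chains_0:
  assumes "\<gamma> \<in> chains K 0" "K \<subseteq> order_complex r P"
  shows "sum \<gamma> K = (\<Sum>v\<in>P. \<gamma> {v})"
proof -
  let ?S = "{\<sigma> \<in> K. \<gamma> \<sigma> \<noteq> 0}"
  have "finite K" using finite_subset[OF assms(2) finite_order_complex] by simp
  have "?S \<subseteq> (\<lambda>v. {v}) ` P"
  proof
    fix \<sigma> assume "\<sigma> \<in> ?S"
    then have "card \<sigma> = 1" "\<sigma> \<subseteq> P" using assms by (auto simp: chains_def order_complex_def)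
    then show "\<sigma> \<in> (\<lambda>v. {v}) ` P" by (auto simp: card_1_singleton_iff)
  qed
  have "sum \<gamma> K = sum \<gamma> ?S"
    by (rule sum.mono_neutral_right) (use \<open>finite K\<close> in auto)
  also have "\<dots> = sum \<gamma> ((\<lambda>v. {v}) ` P)"
    by (rule sum.mono_neutral_left) (use \<open>?S \<subseteq> _\<close> assms(1) finite_P in \<open>auto simp: chains_def\<close>)
  also have "\<dots> = (\<Sum>v\<in>P. \<gamma> {v})"
    by (rule sum.reindex_cong[where l = "\<lambda>v. {v}"]) (auto simp: inj_on_def)
  finally show ?thesis .
qed

lemma link_chain_red_cycle:
  assumes c: "c \<in> chains (Dskel r P (int (Suc m))) (Suc j)" and a: "a \<in> P" "pdim r P a = Suc m"
    and bd_c: "bd r (Suc j) c \<in> chains (Dskel r P (int m)) j"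
  shows "link_chain c a \<in> red_cycles r (order_complex r (below r P a)) j"
proof -
  let ?K = "order_complex r (below r P a)"
  have \<gamma>: "link_chain c a \<in> chains ?K j" by (rule link_chain_chains[OF c a(2)])
  have cycle: "aug_bd (link_chain c a) = (\<lambda>_. 0)" by (rule aug_bd_link_chain[OF c a bd_c])
  have "below r P a \<subseteq> P" by (auto simp: below_def)
  show ?thesis
  proof (cases j)
    case 0
    have "sum (link_chain c a) ?K = (\<Sum>v\<in>P. link_chain c a {v})"
      using sum_chains_0 \<gamma> 0 order_complex_mono[OF \<open>below r P a \<subseteq> P\<close>] by simp
    also have "\<dots> = aug_bd (link_chain c a) {}" by (simp add: aug_bd_def face_sign_def)
    finally show ?thesis using \<gamma> cycle 0 by (simp add: red_cycles_def)
  next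
    case (Suc j')
    have "supported (link_chain c a)" using chains_supported[OF \<gamma> \<open>below r P a \<subseteq> P\<close>] .
    then show ?thesis using \<gamma> cycle Suc by (simp add: red_cycles_def bd_Suc_eq_aug_bd)
  qed
qed

text \<open>In degree 0 the link chain lives on the empty face; it is filled by a vertex below a.\<close>
lemma link_chain_filling_0:
  assumes c: "c \<in> chains K 0" and a: "a \<in> P" "pdim r P a \<noteq> 0"
  obtains \<beta> where "\<beta> \<in> chains (order_complex r (below r P a)) 0" "aug_bd \<beta> = link_chain c a"
proof -
  obtain b where b: "b \<in> below r P a" using below_nonempty[OF a] by blast
  then have "b \<in> P" by (simp add: below_def)
  define \<beta> where "\<beta> \<tau> = (if \<tau> = {b} then c {a} else 0)" for \<tau>
  have "{b} \<in> order_complex r (below r P a)"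
    using b r_refl[OF \<open>b \<in> P\<close>] by (auto simp: order_complex_def is_chain_def)
  then have "\<beta> \<in> chains (order_complex r (below r P a)) 0" by (simp add: chains_def \<beta>_def)
  moreover have "aug_bd \<beta> \<tau> = link_chain c a \<tau>" for \<tau>
  proof (cases "\<tau> = {}")
    case True
    then show ?thesis using \<open>b \<in> P\<close> finite_P by (simp add: aug_bd_def face_sign_def \<beta>_def link_chain_def)
  next
    case False
    have "\<beta> (insert v \<tau>) = 0" if "v \<notin> \<tau>" for v
      using False that by (auto simp: \<beta>_def)
    moreover have "link_chain c a \<tau> = 0"
      using c False by (auto simp: link_chain_def chains_def card_1_singleton_iff)
    ultimately show ?thesis by (simp add: aug_bd_def)
  qed
  ultimately show ?thesis using that by blast
qed

section \<open>Pushing chains into skeleta\<close>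

definition acyclic_below :: "'k::comm_ring_1 itself \<Rightarrow> bool" where
  "acyclic_below k \<longleftrightarrow>
     (\<forall>a\<in>P. \<forall>m::nat. int m \<le> int (pdim r P a) - 2 \<longrightarrow>
        red_homology_vanishes r (order_complex r (below r P a)) m k)"

lemma link_chain_filling:
  fixes c :: "'a set \<Rightarrow> 'k::comm_ring_1"
  assumes acyclic: "acyclic_below TYPE('k)" and "k \<le> m"
    and c: "c \<in> chains (Dskel r P (int (Suc m))) k" and a: "a \<in> P" "pdim r P a = Suc m"
    and bd_c: "bd r k c \<in> chains (Dskel r P (int m)) (k - 1)"
  obtains \<beta> where "\<beta> \<in> chains (order_complex r (below r P a)) k" "aug_bd \<beta> = link_chain c a"
proof (cases k)
  case 0
  then show ?thesis using link_chain_filling_0[of c _ a] c a that by auto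
next
  case (Suc j)
  have "link_chain c a \<in> red_cycles r (order_complex r (below r P a)) j"
    using link_chain_red_cycle c a bd_c Suc by simp
  moreover have "int j \<le> int (pdim r P a) - 2" using \<open>k \<le> m\<close> a(2) Suc by simp
  then have "red_homology_vanishes r (order_complex r (below r P a)) j TYPE('k)"
    using acyclic a(1) by (simp add: acyclic_below_def)
  ultimately obtain \<beta> where \<beta>: "\<beta> \<in> chains (order_complex r (below r P a)) (Suc j)"
      "link_chain c a = bd r (Suc j) \<beta>"
    by (auto simp: red_homology_vanishes_def boundaries_def)
  moreover have "supported \<beta>" using chains_supported[OF \<beta>(1)] by (auto simp: below_def)
  ultimately show ?thesis using that Suc by (simp add: bd_Suc_eq_aug_bd)
qed

lemma Dskel_Suc_minus_top_cones:
  fixes c :: "'a set \<Rightarrow> 'k::comm_ring_1"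
  assumes c: "c \<in> chains (Dskel r P (int (Suc m))) k"
  shows "(\<lambda>\<rho>. c \<rho> - (\<Sum>a\<in>{a \<in> P. pdim r P a = Suc m}. cone a (link_chain c a) \<rho>))
    \<in> chains (Dskel r P (int m)) k"
proof (unfold chains_def, intro CollectI allI impI)
  let ?A = "{a \<in> P. pdim r P a = Suc m}"
  fix \<rho> assume nz: "c \<rho> - (\<Sum>a\<in>?A. cone a (link_chain c a) \<rho>) \<noteq> 0"
  have "c \<rho> \<noteq> 0"
  proof
    assume "c \<rho> = 0"
    then have "cone a (link_chain c a) \<rho> = 0" for a by (simp add: cone_link_chain)
    then show False using nz \<open>c \<rho> = 0\<close> by simp
  qed
  then have face: "\<rho> \<in> Dskel r P (int (Suc m))" "card \<rho> = Suc k" using c by (auto simp: chains_def)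
  have "pdim r P a0 \<noteq> Suc m" if "a0 \<in> \<rho>" for a0
  proof
    assume a0: "pdim r P a0 = Suc m"
    have "a0 \<in> P" using face(1) Dskel_subset that by (auto simp: order_complex_def)
    have "(\<Sum>a\<in>?A. cone a (link_chain c a) \<rho>) = (\<Sum>a\<in>?A. if a = a0 then c \<rho> else 0)"
      by (rule sum.cong) (use Dskel_top_unique[OF face(1) that a0] that in \<open>auto simp: cone_link_chain\<close>)
    also have "\<dots> = c \<rho>" using finite_P \<open>a0 \<in> P\<close> a0 by simp
    finally show False using nz by simp
  qed
  then show "\<rho> \<in> Dskel r P (int m) \<and> card \<rho> = Suc k"
    using Dskel_Suc_face_without_top face by blast
qed

lemma push_down_one:
  fixes c :: "'a set \<Rightarrow> 'k::comm_ring_1"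
  assumes acyclic: "acyclic_below TYPE('k)" and "k \<le> m"
    and c: "c \<in> chains (Dskel r P (int (Suc m))) k"
    and bd_c: "bd r k c \<in> chains (Dskel r P (int m)) (k - 1)"
  obtains e l where "e \<in> chains (order_complex r P) (Suc k)" "l \<in> chains (Dskel r P (int m)) k"
    "c = (\<lambda>\<sigma>. bd r (Suc k) e \<sigma> + l \<sigma>)"
proof -
  define A where "A = {a \<in> P. pdim r P a = Suc m}"
  have "\<exists>\<beta>. \<beta> \<in> chains (order_complex r (below r P a)) k \<and> aug_bd \<beta> = link_chain c a"
    if "a \<in> A" for a
    using link_chain_filling[OF acyclic \<open>k \<le> m\<close> c _ _ bd_c] that by (auto simp: A_def)
  then obtain \<beta> where \<beta>: "\<And>a. a \<in> A \<Longrightarrow> \<beta> a \<in> chains (order_complex r (below r P a)) k"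
      "\<And>a. a \<in> A \<Longrightarrow> aug_bd (\<beta> a) = link_chain c a"
    by metis
  have cones: "\<forall>a\<in>A. cone a (\<beta> a) \<in> chains (order_complex r P) (Suc k)"
    using cone_chains \<beta>(1) by (auto simp: A_def)
  have bd_cone_\<beta>: "bd r (Suc k) (cone a (\<beta> a)) = (\<lambda>\<rho>. \<beta> a \<rho> - cone a (link_chain c a) \<rho>)"
    if "a \<in> A" for a
    using bd_cone[of a "\<beta> a" k] \<beta>[OF that] that by (auto simp: A_def chains_def order_complex_def)
  define e where "e = (\<lambda>\<sigma>. - (\<Sum>a\<in>A. cone a (\<beta> a) \<sigma>))"
  have e: "e \<in> chains (order_complex r P) (Suc k)"
    unfolding e_def by (rule chains_neg_sum[OF cones])
  have "bd r (Suc k) e = (\<lambda>\<rho>. - (\<Sum>a\<in>A. bd r (Suc k) (cone a (\<beta> a)) \<rho>))"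
    unfolding e_def using cones by (intro bd_neg_sum) (blast intro: chains_supported)
  then have bd_e: "bd r (Suc k) e = (\<lambda>\<rho>. (\<Sum>a\<in>A. cone a (link_chain c a) \<rho>) - (\<Sum>a\<in>A. \<beta> a \<rho>))"
    by (simp add: bd_cone_\<beta> sum_subtractf)
  define l where "l = (\<lambda>\<sigma>. c \<sigma> - bd r (Suc k) e \<sigma>)"
  have "l = (\<lambda>\<rho>. (c \<rho> - (\<Sum>a\<in>A. cone a (link_chain c a) \<rho>)) + (\<Sum>a\<in>A. \<beta> a \<rho>))"
    by (simp add: l_def bd_e fun_eq_iff)
  moreover have "\<forall>a\<in>A. \<beta> a \<in> chains (Dskel r P (int m)) k"
  proof
    fix a assume "a \<in> A"
    then have "a \<in> P" "pdim r P a = Suc m" by (auto simp: A_def)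
    then show "\<beta> a \<in> chains (Dskel r P (int m)) k"
      using \<beta>(1)[OF \<open>a \<in> A\<close>] chains_mono[OF order_complex_below_subset_Dskel] by blast
  qed
  ultimately have "l \<in> chains (Dskel r P (int m)) k"
    using lincomb_closed_add[OF chains_lincomb_closed Dskel_Suc_minus_top_cones[OF c, folded A_def]
        chains_sum]
    by simp
  moreover have "c = (\<lambda>\<sigma>. bd r (Suc k) e \<sigma> + l \<sigma>)" by (simp add: l_def)
  ultimately show ?thesis using that e by blast
qed

lemma push_down:
  fixes c :: "'a set \<Rightarrow> 'k::comm_ring_1"
  assumes acyclic: "acyclic_below TYPE('k)"
  shows "c \<in> chains (Dskel r P (int (k + j))) k \<Longrightarrow> bd r k c \<in> chains (Dskel r P (int k - 1)) (k - 1)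
    \<Longrightarrow> \<exists>e c'. e \<in> chains (order_complex r P) (Suc k) \<and> c' \<in> chains (Dskel r P (int k)) k
        \<and> c = (\<lambda>\<sigma>. bd r (Suc k) e \<sigma> + c' \<sigma>)"
proof (induction j arbitrary: c)
  case 0
  then show ?case using zero_in_chains by fastforce
next
  case (Suc j)
  have "int k - 1 \<le> int (k + j)" by simp
  then have "bd r k c \<in> chains (Dskel r P (int (k + j))) (k - 1)"
    using Suc.prems(2) chains_mono[OF Dskel_mono] by blast
  moreover have "c \<in> chains (Dskel r P (int (Suc (k + j)))) k" using Suc.prems(1) by simp
  ultimately obtain e1 l where e1: "e1 \<in> chains (order_complex r P) (Suc k)"
      and l: "l \<in> chains (Dskel r P (int (k + j))) k" and c_eq: "c = (\<lambda>\<sigma>. bd r (Suc k) e1 \<sigma> + l \<sigma>)"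
    using push_down_one[OF acyclic, of k "k + j" c] by auto
  have "bd r k l = bd r k c"
    using bd_add_boundary[OF e1 subset_refl chains_Dskel_supported[OF l]] c_eq by simp
  then obtain e2 c' where e2: "e2 \<in> chains (order_complex r P) (Suc k)"
      and c': "c' \<in> chains (Dskel r P (int k)) k" and l_eq: "l = (\<lambda>\<sigma>. bd r (Suc k) e2 \<sigma> + c' \<sigma>)"
    using Suc.IH[OF l] Suc.prems(2) by auto
  have "c = (\<lambda>\<sigma>. bd r (Suc k) (\<lambda>\<sigma>. e1 \<sigma> + e2 \<sigma>) \<sigma> + c' \<sigma>)"
    using c_eq l_eq bd_lincomb[of e1 e2 "Suc k" 1 1]
      chains_supported[OF e1 subset_refl] chains_supported[OF e2 subset_refl]
    by (simp add: fun_eq_iff)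
  moreover have "(\<lambda>\<sigma>. e1 \<sigma> + e2 \<sigma>) \<in> chains (order_complex r P) (Suc k)"
    by (rule lincomb_closed_add[OF chains_lincomb_closed e1 e2])
  ultimately show ?case using c' by blast
qed

lemma homologous_in_skeleton:
  fixes c :: "'a set \<Rightarrow> 'k::comm_ring_1"
  assumes acyclic: "acyclic_below TYPE('k)"
    and c: "c \<in> chains (order_complex r P) k"
    and bd_c: "bd r k c \<in> chains (Dskel r P (int k - 1)) (k - 1)"
  obtains e c' where "e \<in> chains (order_complex r P) (Suc k)" "c' \<in> chains (Dskel r P (int k)) k"
    "c = (\<lambda>\<sigma>. bd r (Suc k) e \<sigma> + c' \<sigma>)" "bd r k c' = bd r k c"
proof -
  have "c \<in> chains (Dskel r P (int (k + card P))) k" using c Dskel_full[of k] by simp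
  then obtain e c' where e: "e \<in> chains (order_complex r P) (Suc k)"
      and c': "c' \<in> chains (Dskel r P (int k)) k" and c_eq: "c = (\<lambda>\<sigma>. bd r (Suc k) e \<sigma> + c' \<sigma>)"
    using push_down[OF acyclic _ bd_c] by blast
  moreover have "bd r k c' = bd r k c"
    using bd_add_boundary[OF e subset_refl chains_Dskel_supported[OF c']] c_eq by simp
  ultimately show ?thesis using that by blast
qed

lemma cycle_homologous_in_skeleton:
  fixes z :: "'a set \<Rightarrow> 'k::comm_ring_1"
  assumes acyclic: "acyclic_below TYPE('k)" and z: "z \<in> cycles r (order_complex r P) n"
  shows "\<exists>w\<in>cycles r (Dskel r P (int n)) n. (\<lambda>\<sigma>. z \<sigma> - w \<sigma>) \<in> boundaries r (order_complex r P) n"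
proof -
  have z_chain: "z \<in> chains (order_complex r P) n" and bd_z: "bd r n z = (\<lambda>_. 0)"
    using z by (auto simp: cycles_def)
  then have "bd r n z \<in> chains (Dskel r P (int n - 1)) (n - 1)" by (simp add: zero_in_chains)
  then obtain e w where e: "e \<in> chains (order_complex r P) (Suc n)"
      and w: "w \<in> chains (Dskel r P (int n)) n" "bd r n w = bd r n z"
      and z_eq: "z = (\<lambda>\<sigma>. bd r (Suc n) e \<sigma> + w \<sigma>)"
    by (rule homologous_in_skeleton[OF acyclic z_chain])
  have "(\<lambda>\<sigma>. z \<sigma> - w \<sigma>) = bd r (Suc n) e" using z_eq by (simp add: fun_eq_iff)
  then show ?thesis using e w bd_z by (auto simp: cycles_def boundaries_def)
qed

section \<open>The conic complex\<close>

lemma rel_boundaries_Dskel_trivial: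
  assumes "m < int (Suc j)" "m' < int j"
  shows "rel_boundaries r (Dskel r P m) (Dskel r P m') j = {\<lambda>_. 0}"
proof
  show "rel_boundaries r (Dskel r P m) (Dskel r P m') j \<subseteq> {\<lambda>_. 0}"
  proof
    fix x assume "x \<in> rel_boundaries r (Dskel r P m) (Dskel r P m') j"
    then obtain c l where "c \<in> chains (Dskel r P m) (Suc j)" "l \<in> chains (Dskel r P m') j"
      and x: "x = (\<lambda>\<sigma>. bd r (Suc j) c \<sigma> + l \<sigma>)"
      by (auto simp: rel_boundaries_def)
    then have "c = (\<lambda>_. 0)" "l = (\<lambda>_. 0)" using chains_Dskel_eq_zero assms by blast+
    then show "x \<in> {\<lambda>_. 0}" using x by simp
  qed
  show "{\<lambda>_. 0} \<subseteq> rel_boundaries r (Dskel r P m) (Dskel r P m') j"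
    by (auto simp: rel_boundaries_def intro!: exI[of _ "\<lambda>_. 0"] zero_in_chains)
qed

lemma conic_cycles_eq: "conic_cycles r P n = cycles r (Dskel r P (int n)) n"
proof -
  have "rel_boundaries r (Dskel r P (int n - 1)) (Dskel r P (int n - 2)) (n - 1) = {\<lambda>_. 0}"
    by (rule rel_boundaries_Dskel_trivial) auto
  then show ?thesis
    unfolding conic_cycles_def cycles_def rel_cycles_def by (auto simp: zero_in_chains)
qed

lemma conic_boundaries_eq:
  fixes n :: nat
  assumes acyclic: "acyclic_below TYPE('k::comm_ring_1)"
  shows "(conic_boundaries r P n :: ('a set \<Rightarrow> 'k) set)
    = chains (Dskel r P (int n)) n \<inter> boundaries r (order_complex r P) n"
proof -
  have trivial: "rel_boundaries r (Dskel r P (int n)) (Dskel r P (int n - 1)) n = {\<lambda>_. 0}"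
    by (rule rel_boundaries_Dskel_trivial) auto
  have conic: "conic_boundaries r P n
    = bd r (Suc n) ` rel_cycles r (Dskel r P (int n + 1)) (Dskel r P (int n)) (Suc n)"
    unfolding conic_boundaries_def trivial by fastforce
  show ?thesis
  proof (rule set_eqI iffI)+
    fix w assume "w \<in> conic_boundaries r P n"
    then show "w \<in> chains (Dskel r P (int n)) n \<inter> boundaries r (order_complex r P) n"
      using chains_mono[OF Dskel_subset] by (auto simp: conic rel_cycles_def boundaries_def)
  next
    fix w :: "'a set \<Rightarrow> 'k"
    assume "w \<in> chains (Dskel r P (int n)) n \<inter> boundaries r (order_complex r P) n"
    then obtain c where w: "w \<in> chains (Dskel r P (int n)) n" "w = bd r (Suc n) c"
      and c: "c \<in> chains (order_complex r P) (Suc n)"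
      by (auto simp: boundaries_def)
    then obtain c' where c': "c' \<in> chains (Dskel r P (int (Suc n))) (Suc n)" "bd r (Suc n) c' = w"
      using homologous_in_skeleton[OF acyclic c] by auto
    then have "c' \<in> rel_cycles r (Dskel r P (int n + 1)) (Dskel r P (int n)) (Suc n)"
      using w(1) by (simp add: rel_cycles_def add.commute)
    then show "w \<in> conic_boundaries r P n"
      unfolding conic using c'(2) by blast
  qed
qed

end

theorem mainTheorem1:
  fixes P :: "'a set" and r :: "'a rel" and n :: nat
  assumes "finite P"
    and "partial_order_on P r"
    and "\<forall>a\<in>P. \<forall>m::nat. int m \<le> int (pdim r P a) - 2 \<longrightarrow>
           red_homology_vanishes r (order_complex r (below r P a)) m TYPE('k::comm_ring_1)"
  shows "quot_iso (cycles r (order_complex r P) n :: ('a set \<Rightarrow> 'k) set)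
                  (boundaries r (order_complex r P) n)
                  (conic_cycles r P n) (conic_boundaries r P n)"
proof -
  interpret finite_poset P r using assms(1,2) by unfold_locales
  have acyclic: "acyclic_below TYPE('k)" using assms(3) by (simp add: acyclic_below_def)
  let ?Z = "cycles r (Dskel r P (int n)) n :: ('a set \<Rightarrow> 'k) set"
  let ?B = "boundaries r (order_complex r P) n :: ('a set \<Rightarrow> 'k) set"
  show ?thesis
    unfolding conic_cycles_eq conic_boundaries_eq[OF acyclic]
  proof (rule quot_iso_subquotient)
    show "lincomb_closed (cycles r (order_complex r P) n)" "lincomb_closed ?Z"
      using cycles_lincomb_closed Dskel_subset by blast+
    show "lincomb_closed ?B" by (rule boundaries_lincomb_closed) simp
    show "?Z \<subseteq> cycles r (order_complex r P) n"
      using chains_mono[OF Dskel_subset] by (auto simp: cycles_def)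
    show "chains (Dskel r P (int n)) n \<inter> ?B \<subseteq> ?B" by blast
    show "?Z \<inter> ?B \<subseteq> chains (Dskel r P (int n)) n \<inter> ?B" by (auto simp: cycles_def)
    show "\<forall>z\<in>cycles r (order_complex r P) n. \<exists>w\<in>?Z. (\<lambda>x. z x - w x) \<in> ?B"
      using cycle_homologous_in_skeleton[OF acyclic] by blast
  qed
qed

end
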